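(* Let $\Gamma$ be a single-player extensive-form game without chance nodes, and let $z^*\in\arg\max_{z\in\mathcal Z}u_1(z)$. Then $$\mathrm{VoR}^{\mathrm{opt}}(\Gamma)\le\frac{\max_{z\in\mathcal Z}u_1(z)}{\max_{z\in\mathcal Z}\alpha(z)u_1(z)}\le\frac{1}{\alpha(z^* )}.$$
   Context: A single-player extensive-form game without chance nodes consists of a finite rooted tree (nodes $\mathcal H$, leaves $\mathcal Z$, actions $A_h$), all nonterminal nodes belonging to Player 1, a utility $u_1:\mathcal Z\to\mathbb R_{\ge0}$, and a partition $\mathcal I_1$ of nonterminal nodes into infosets with common action sets $A_I$. For a node $h$ with root-to-$h$ path $(h_0,\dots,h_{d-1})$, $\mathrm{obs}_1(h)=(I_k,a_k)_k$ lists infosets of and actions taken at the $h_k$. $\mathrm{pr}_1(\Gamma)$ has the same tree and utilities, with each infoset partitioned into classes of $h\sim h'\iff\mathrm{obs}_1(h)=\mathrm{obs}_1(h')$. Behavioral strategies assign distributions over $A_I$ to infosets; $u_1(\mathrm{opt}(\cdot))$ is the maximum expected utility; $\mathrm{VoR}^{\mathrm{opt}}(\Gamma)=u_1(\mathrm{opt}(\mathrm{pr}_1(\Gamma)))/u_1(\mathrm{opt}(\Gamma))$. For $z\in\mathcal Z$ with path infosets/actions $(I_k,a_k)$, and $I\in\mathcal I_1$, $a\in A_I$: $n_z(I)=|\{k:I_k=I\}|$, $n_z(a)=|\{k:I_k=I,a_k=a\}|$, $p_z(a)=n_z(a)/n_z(I)$, $\alpha(z)=\prod_{I:n_z(I)>1}\prod_{a\in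 A_I:n_z(a)>0}p_z(a)^{n_z(a)}$. *)

theory Defs
  imports Complex_Main
begin

text \<open>A single-player game tree without chance: nodes are action sequences (histories) in a
finite prefix-closed set H containing the root [].
The infoset of a nonterminal node h is the label lab h (infosets = fibres of lab on NT H).
The utility is u, relevant on leaves.\<close>

definition NT :: "'a list set \<Rightarrow> 'a list set" where
  "NT H = {h \<in> H. \<exists>a. h @ [a] \<in> H}"

definition leaves :: "'a list set \<Rightarrow> 'a list set" where
  "leaves H = {h \<in> H. \<forall>a. h @ [a] \<notin> H}"

definition acts :: "'a list set \<Rightarrow> 'a list \<Rightarrow> 'a set" where
  "acts H h = {a. h @ [a] \<in> H}"

definition actsI :: "'a list set \<Rightarrow> ('a list \<Rightarrow> 'i) \<Rightarrow> 'i \<Rightarrow> 'a set" where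
  "actsI H lab i = {a. \<exists>h \<in> NT H. lab h = i \<and> h @ [a] \<in> H}"

definition wf_game :: "'a list set \<Rightarrow> ('a list \<Rightarrow> 'i) \<Rightarrow> ('a list \<Rightarrow> real) \<Rightarrow> bool" where
  "wf_game H lab u \<longleftrightarrow>
     finite H \<and> [] \<in> H \<and> (\<forall>h a. h @ [a] \<in> H \<longrightarrow> h \<in> H) \<and>
     (\<forall>h \<in> NT H. \<forall>h' \<in> NT H. lab h = lab h' \<longrightarrow> acts H h = acts H h') \<and>
     (\<forall>z \<in> leaves H. u z \<ge> 0)"

definition is_behav :: "'a list set \<Rightarrow> ('a list \<Rightarrow> 'i) \<Rightarrow> ('i \<Rightarrow> 'a \<Rightarrow> real) \<Rightarrow> bool" where
  "is_behav H lab \<sigma> \<longleftrightarrow>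
     (\<forall>h \<in> NT H. (\<forall>a \<in> acts H h. \<sigma> (lab h) a \<ge> 0) \<and> (\<Sum>a \<in> acts H h. \<sigma> (lab h) a) = 1)"

definition reach :: "('a list \<Rightarrow> 'i) \<Rightarrow> ('i \<Rightarrow> 'a \<Rightarrow> real) \<Rightarrow> 'a list \<Rightarrow> real" where
  "reach lab \<sigma> z = (\<Prod>k < length z. \<sigma> (lab (take k z)) (z ! k))"

definition eu :: "'a list set \<Rightarrow> ('a list \<Rightarrow> 'i) \<Rightarrow> ('i \<Rightarrow> 'a \<Rightarrow> real) \<Rightarrow> ('a list \<Rightarrow> real) \<Rightarrow> real" where
  "eu H lab \<sigma> u = (\<Sum>z \<in> leaves H. reach lab \<sigma> z * u z)"

definition opt_val :: "'a list set \<Rightarrow> ('a list \<Rightarrow> 'i) \<Rightarrow> ('a list \<Rightarrow> real) \<Rightarrow> real" where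
  "opt_val H lab u = Sup {eu H lab \<sigma> u | \<sigma>. is_behav H lab \<sigma>}"

definition obs :: "('a list \<Rightarrow> 'i) \<Rightarrow> 'a list \<Rightarrow> ('i \<times> 'a) list" where
  "obs lab h = map (\<lambda>k. (lab (take k h), h ! k)) [0..<length h]"

text \<open>pr_1(Gamma): each infoset split into classes with equal observation history.\<close>
definition pr_inf :: "('a list \<Rightarrow> 'i) \<Rightarrow> 'a list \<Rightarrow> 'i \<times> ('i \<times> 'a) list" where
  "pr_inf lab h = (lab h, obs lab h)"

definition VoR_opt :: "'a list set \<Rightarrow> ('a list \<Rightarrow> 'i) \<Rightarrow> ('a list \<Rightarrow> real) \<Rightarrow> real" where
  "VoR_opt H lab u = opt_val H (pr_inf lab) u / opt_val H lab u"

definition nI :: "('a list \<Rightarrow> 'i) \<Rightarrow> 'a list \<Rightarrow> 'i \<Rightarrow> nat" where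
  "nI lab z i = card {k. k < length z \<and> lab (take k z) = i}"

definition na :: "('a list \<Rightarrow> 'i) \<Rightarrow> 'a list \<Rightarrow> 'i \<Rightarrow> 'a \<Rightarrow> nat" where
  "na lab z i a = card {k. k < length z \<and> lab (take k z) = i \<and> z ! k = a}"

definition pz :: "('a list \<Rightarrow> 'i) \<Rightarrow> 'a list \<Rightarrow> 'i \<Rightarrow> 'a \<Rightarrow> real" where
  "pz lab z i a = real (na lab z i a) / real (nI lab z i)"

definition alpha :: "'a list set \<Rightarrow> ('a list \<Rightarrow> 'i) \<Rightarrow> 'a list \<Rightarrow> real" where
  "alpha H lab z = (\<Prod>i \<in> {i. nI lab z i > 1}.
      \<Prod>a \<in> {a \<in> actsI H lab i. na lab z i a > 0}. pz lab z i a ^ na lab z i a)"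

end

theory Submission
  imports Defs "HOL-Library.Sublist"
begin

text \<open>Fix a leaf z. Playing at every infoset I the empirical frequencies p_z(a) of the actions
  taken at I on the path to z is a behavioural strategy of the game (consistency of action sets
  within infosets makes these frequencies sum to 1), and it reaches z with probability
  prod_k p_z(a_k) = alpha(z). Hence the optimal value of the game is at least alpha(z) u(z).
  Conversely, the reach probabilities of a behavioural strategy of any game on the same tree,
  in particular of pr_1 of the game, sum to 1 over the leaves, so its optimal value is at most
  max u. The second inequality compares the maximum of alpha u with its value at z*.\<close>

lemma reach_snoc: "reach lab \<sigma> (h @ [a]) = reach lab \<sigma> h * \<sigma> (lab h) a"
  unfolding reach_def by (auto simp: prod.lessThan_Suc nth_append intro!: prod.cong)

locale game_tree =
  fixes H :: "'a list set"
  assumes finite_H: "finite H"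
    and Nil_in_H: "[] \<in> H"
    and prefix_closed: "h @ [a] \<in> H \<Longrightarrow> h \<in> H"
begin

lemma prefix_in_H:
  assumes "prefix h z" and "z \<in> H"
  shows "h \<in> H"
proof -
  obtain t where "z = h @ t" using assms(1) by (rule prefixE)
  then show ?thesis using assms(2)
  proof (induction t arbitrary: z rule: rev_induct)
    case (snoc a t)
    then show ?case using prefix_closed[of "h @ t" a] by simp
  qed simp
qed

lemma take_in_NT:
  assumes "z \<in> H" and "k < length z"
  shows "take k z \<in> NT H" and "z ! k \<in> acts H (take k z)"
proof -
  have "take k z @ [z ! k] \<in> H"
    using prefix_in_H[OF take_is_prefix assms(1), of "Suc k"] assms(2)
    by (simp add: take_Suc_conv_app_nth)
  then show "take k z \<in> NT H" and "z ! k \<in> acts H (take k z)"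
    using prefix_closed by (auto simp: NT_def acts_def)
qed

lemma finite_acts: "finite (acts H h)"
proof -
  have "acts H h = (\<lambda>a. h @ [a]) -` H" by (auto simp: acts_def)
  then show ?thesis using finite_vimageI[OF finite_H, of "\<lambda>a. h @ [a]"] by (simp add: inj_def)
qed

lemma finite_leaves: "finite (leaves H)"
  using finite_H by (simp add: leaves_def)

lemma reach_nonneg:
  assumes "is_behav H lab \<sigma>" and "z \<in> H"
  shows "reach lab \<sigma> z \<ge> 0"
  using assms take_in_NT[OF assms(2)] unfolding reach_def is_behav_def
  by (auto intro!: prod_nonneg)

definition leaves_below :: "'a list \<Rightarrow> 'a list set" where
  "leaves_below h = {z \<in> leaves H. prefix h z}"

lemma leaves_below_leaf:
  assumes "h \<in> leaves H"
  shows "leaves_below h = {h}"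
proof safe
  fix z assume "z \<in> leaves_below h"
  then obtain t where z: "z = h @ t" "z \<in> H" by (auto simp: leaves_below_def leaves_def elim: prefixE)
  show "z = h"
  proof (cases t)
    case (Cons a t')
    with z have "h @ [a] \<in> H" by (auto intro: prefix_in_H[of "h @ [a]" z] prefixI)
    with assms show ?thesis by (simp add: leaves_def)
  qed (use z in simp)
qed (use assms in \<open>simp add: leaves_below_def\<close>)

lemma leaves_below_inner:
  assumes "h \<notin> leaves H"
  shows "leaves_below h = (\<Union>a \<in> acts H h. leaves_below (h @ [a]))"
proof safe
  fix z assume "z \<in> leaves_below h"
  then obtain t where z: "z = h @ t" "z \<in> leaves H" by (auto simp: leaves_below_def elim: prefixE)
  with assms obtain a t' where "t = a # t'" by (cases t) auto
  with z have pre: "prefix (h @ [a]) z" by simp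
  moreover have "z \<in> H" using z by (simp add: leaves_def)
  ultimately have "a \<in> acts H h" by (simp add: prefix_in_H acts_def)
  with pre z show "z \<in> (\<Union>a \<in> acts H h. leaves_below (h @ [a]))"
    by (auto simp: leaves_below_def)
qed (auto simp: leaves_below_def elim: prefix_order.trans[rotated])

lemma sum_reach_leaves_below:
  assumes beh: "is_behav H lab \<sigma>" and "h \<in> H"
  shows "(\<Sum>z \<in> leaves_below h. reach lab \<sigma> z) = reach lab \<sigma> h"
  using \<open>h \<in> H\<close>
proof (induction h rule: measure_induct_rule[where f = "\<lambda>h. Max (length ` H) - length h"])
  case (less h)
  show ?case
  proof (cases "h \<in> leaves H")
    case True
    then show ?thesis by (simp add: leaves_below_leaf)
  next
    case False
    with less.prems have h: "h \<in> NT H" by (auto simp: NT_def leaves_def)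
    have IH: "(\<Sum>z \<in> leaves_below (h @ [a]). reach lab \<sigma> z) = reach lab \<sigma> (h @ [a])"
      if "a \<in> acts H h" for a
    proof (rule less.IH)
      show "h @ [a] \<in> H" using that by (simp add: acts_def)
      then have "length (h @ [a]) \<le> Max (length ` H)" using finite_H by (simp del: length_append)
      then show "Max (length ` H) - length (h @ [a]) < Max (length ` H) - length h" by simp
    qed
    have "(\<Sum>z \<in> leaves_below h. reach lab \<sigma> z)
        = (\<Sum>a \<in> acts H h. \<Sum>z \<in> leaves_below (h @ [a]). reach lab \<sigma> z)"
      unfolding leaves_below_inner[OF False]
      by (rule sum.UNION_disjoint[OF finite_acts])
         (auto simp: leaves_below_def finite_leaves dest: prefix_same_cases)
    also have "\<dots> = (\<Sum>a \<in> acts H h. reach lab \<sigma> h * \<sigma> (lab h) a)"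
      by (rule sum.cong[OF refl]) (simp add: IH reach_snoc)
    also have "\<dots> = reach lab \<sigma> h"
      using beh h by (simp add: is_behav_def flip: sum_distrib_left)
    finally show ?thesis .
  qed
qed

lemma sum_reach_leaves:
  assumes "is_behav H lab \<sigma>"
  shows "(\<Sum>z \<in> leaves H. reach lab \<sigma> z) = 1"
  using sum_reach_leaves_below[OF assms Nil_in_H]
  by (simp add: leaves_below_def reach_def)

lemma eu_le_Max:
  assumes "is_behav H lab \<sigma>"
  shows "eu H lab \<sigma> u \<le> Max (u ` leaves H)"
proof -
  have "eu H lab \<sigma> u \<le> (\<Sum>z \<in> leaves H. reach lab \<sigma> z * Max (u ` leaves H))"
    unfolding eu_def
    using assms reach_nonneg finite_leaves
    by (intro sum_mono mult_left_mono) (auto simp: leaves_def)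
  also have "\<dots> = Max (u ` leaves H)"
    using sum_reach_leaves[OF assms(1)] by (simp flip: sum_distrib_right)
  finally show ?thesis .
qed

lemma eu_le_opt_val:
  assumes "is_behav H lab \<sigma>"
  shows "eu H lab \<sigma> u \<le> opt_val H lab u"
  unfolding opt_val_def
  by (rule cSup_upper) (use assms eu_le_Max in \<open>auto intro!: bdd_aboveI\<close>)

text \<open>The strategy only witnesses that the supremum in opt_val ranges over a nonempty set.\<close>
lemma opt_val_le_Max:
  assumes "is_behav H lab \<sigma>"
  shows "opt_val H lab u \<le> Max (u ` leaves H)"
  unfolding opt_val_def
  by (rule cSup_least) (use assms eu_le_Max in auto)

end

lemma is_behav_coarsen:
  "is_behav H (\<lambda>h. f (lab h)) \<sigma> \<Longrightarrow> is_behav H lab (\<lambda>i. \<sigma> (f i))"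
  by (simp add: is_behav_def)

lemma nI_pos_iff: "0 < nI lab z i \<longleftrightarrow> (\<exists>k < length z. lab (take k z) = i)"
  by (auto simp: nI_def card_gt_0_iff)

lemma na_pos_iff: "0 < na lab z i a \<longleftrightarrow> (\<exists>k < length z. lab (take k z) = i \<and> z ! k = a)"
  by (auto simp: na_def card_gt_0_iff)

lemma na_le_nI: "na lab z i a \<le> nI lab z i"
  unfolding na_def nI_def by (rule card_mono) auto

lemma alpha_pos: "0 < alpha H lab z"
  unfolding alpha_def pz_def using na_le_nI[of lab z]
  by (intro prod_pos) (auto intro: less_le_trans)

text \<open>Regroup the product along the path by (infoset, action) pairs; infosets visited only
  once contribute the factor 1, which is why alpha omits them.\<close>
lemma (in game_tree) prod_path_pz_eq_alpha:
  assumes "z \<in> H"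
  shows "(\<Prod>k < length z. pz lab z (lab (take k z)) (z ! k)) = alpha H lab z"
proof -
  define K where "K = {..<length z}"
  define g where "g k = (lab (take k z), z ! k)" for k
  define f where "f i a = pz lab z i a ^ na lab z i a" for i a
  define I where "I = {i. 1 < nI lab z i}"
  define B where "B i = {a \<in> actsI H lab i. 0 < na lab z i a}" for i
  have "card {k \<in> K. g k = (i, a)} = na lab z i a" for i a
    unfolding na_def K_def g_def by (rule arg_cong[where f = card]) auto
  then have fibre: "(\<Prod>k \<in> {k \<in> K. g k = y}. case_prod (pz lab z) y) = case_prod f y" for y
    by (cases y) (simp add: f_def)
  have "(\<Prod>k < length z. pz lab z (lab (take k z)) (z ! k))
      = (\<Prod>y \<in> g ` K. \<Prod>k \<in> {k \<in> K. g k = y}. case_prod (pz lab z) y)"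
    unfolding K_def by (subst prod.image_gen[where g = g]) (auto simp: g_def intro!: prod.cong)
  also have "\<dots> = (\<Prod>y \<in> g ` K. case_prod f y)"
    by (simp only: fibre)
  also have "\<dots> = (\<Prod>y \<in> Sigma I B. case_prod f y)"
  proof (rule prod.mono_neutral_right)
    show "finite (g ` K)" by (simp add: K_def)
    show "Sigma I B \<subseteq> g ` K"
      by (auto simp: I_def B_def K_def g_def na_pos_iff)
    show "\<forall>y \<in> g ` K - Sigma I B. case_prod f y = 1"
    proof
      fix y assume "y \<in> g ` K - Sigma I B"
      then obtain k where k: "k < length z" "y = g k" "y \<notin> Sigma I B" by (auto simp: K_def)
      define i where "i = lab (take k z)"
      have "z ! k \<in> actsI H lab i"
        using take_in_NT[OF assms k(1)] by (auto simp: actsI_def acts_def i_def)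
      moreover have "0 < na lab z i (z ! k)"
        using k(1) by (auto simp: na_pos_iff i_def)
      ultimately have "na lab z i (z ! k) = 1" and "nI lab z i = 1"
        using k na_le_nI[of lab z i "z ! k"] by (auto simp: I_def B_def g_def i_def)
      then show "case_prod f y = 1" by (simp add: k(2) g_def f_def pz_def i_def)
    qed
  qed
  also have "\<dots> = alpha H lab z"
  proof -
    have I_sub: "I \<subseteq> (\<lambda>k. lab (take k z)) ` K"
    proof
      fix i assume "i \<in> I"
      then have "0 < nI lab z i" by (simp add: I_def)
      then show "i \<in> (\<lambda>k. lab (take k z)) ` K" by (auto simp: nI_pos_iff K_def)
    qed
    have B_sub: "B i \<subseteq> (!) z ` K" for i
    proof
      fix a assume "a \<in> B i"
      then have "0 < na lab z i a" by (simp add: B_def)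
      then show "a \<in> (!) z ` K" by (auto simp: na_pos_iff K_def)
    qed
    have "finite I" and "\<forall>i \<in> I. finite (B i)"
      using finite_subset[OF I_sub] finite_subset[OF B_sub] by (simp_all add: K_def)
    then show ?thesis
      unfolding alpha_def f_def I_def B_def by (simp flip: prod.Sigma)
  qed
  finally show ?thesis .
qed

definition freq_strategy :: "'a list set \<Rightarrow> ('a list \<Rightarrow> 'i) \<Rightarrow> 'a list \<Rightarrow> 'i \<Rightarrow> 'a \<Rightarrow> real" where
  "freq_strategy H lab z i a =
     (if nI lab z i = 0 then (if a = (SOME b. b \<in> actsI H lab i) then 1 else 0)
      else pz lab z i a)"

lemma reach_freq_strategy:
  "reach lab (freq_strategy H lab z) z = (\<Prod>k < length z. pz lab z (lab (take k z)) (z ! k))"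
  unfolding reach_def
proof (intro prod.cong refl)
  fix k assume "k \<in> {..<length z}"
  then have "0 < nI lab z (lab (take k z))" by (auto simp: nI_pos_iff)
  then show "freq_strategy H lab z (lab (take k z)) (z ! k) = pz lab z (lab (take k z)) (z ! k)"
    by (simp add: freq_strategy_def)
qed

locale game_with_infosets = game_tree H for H :: "'a list set" +
  fixes lab :: "'a list \<Rightarrow> 'i"
  assumes acts_consistent: "h \<in> NT H \<Longrightarrow> h' \<in> NT H \<Longrightarrow> lab h = lab h' \<Longrightarrow> acts H h = acts H h'"
begin

lemma actsI_lab: "h \<in> NT H \<Longrightarrow> actsI H lab (lab h) = acts H h"
  using acts_consistent unfolding actsI_def acts_def by blast

lemma sum_na_acts:
  assumes "z \<in> H" and "h \<in> NT H"
  shows "(\<Sum>a \<in> acts H h. na lab z (lab h) a) = nI lab z (lab h)"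
proof -
  define K where "K = {k. k < length z \<and> lab (take k z) = lab h}"
  have "(!) z ` K \<subseteq> acts H h"
    using take_in_NT[OF assms(1)] acts_consistent[OF _ assms(2)] by (auto simp: K_def)
  then have "(\<Sum>a \<in> acts H h. card {k \<in> K. z ! k = a}) = card K"
    using sum.group[where S = K and T = "acts H h" and g = "(!) z" and h = "\<lambda>_. 1::nat"]
    by (simp add: K_def finite_acts)
  then show ?thesis
    unfolding na_def nI_def K_def by (simp add: conj_assoc)
qed

lemma is_behav_freq_strategy:
  assumes "z \<in> H"
  shows "is_behav H lab (freq_strategy H lab z)"
  unfolding is_behav_def
proof
  fix h assume h: "h \<in> NT H"
  have "(\<Sum>a \<in> acts H h. freq_strategy H lab z (lab h) a) = 1"
  proof (cases "nI lab z (lab h) = 0")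
    case True
    have "acts H h \<noteq> {}" using h by (auto simp: NT_def acts_def)
    then have "(SOME b. b \<in> actsI H lab (lab h)) \<in> acts H h"
      by (simp add: actsI_lab[OF h] some_in_eq)
    with True show ?thesis by (simp add: freq_strategy_def finite_acts)
  next
    case False
    then show ?thesis
      using sum_na_acts[OF assms h]
      by (simp add: freq_strategy_def pz_def flip: sum_divide_distrib of_nat_sum)
  qed
  then show "(\<forall>a \<in> acts H h. 0 \<le> freq_strategy H lab z (lab h) a)
      \<and> (\<Sum>a \<in> acts H h. freq_strategy H lab z (lab h) a) = 1"
    by (simp add: freq_strategy_def pz_def)
qed

lemma alpha_mult_le_opt_val:
  assumes "z \<in> leaves H" and "\<forall>z \<in> leaves H. 0 \<le> u z"
  shows "alpha H lab z * u z \<le> opt_val H lab u"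
proof -
  let ?\<sigma> = "freq_strategy H lab z"
  have "z \<in> H" using assms(1) by (simp add: leaves_def)
  then have behav: "is_behav H lab ?\<sigma>" and reach: "reach lab ?\<sigma> z = alpha H lab z"
    by (simp_all add: is_behav_freq_strategy reach_freq_strategy prod_path_pz_eq_alpha)
  have "alpha H lab z * u z \<le> eu H lab ?\<sigma> u"
    unfolding eu_def reach[symmetric]
    by (rule member_le_sum)
       (use assms behav reach_nonneg finite_leaves in \<open>auto simp: leaves_def intro!: mult_nonneg_nonneg\<close>)
  also have "\<dots> \<le> opt_val H lab u"
    by (rule eu_le_opt_val[OF behav])
  finally show ?thesis .
qed

lemma opt_val_pr_inf_le_Max: "opt_val H (pr_inf lab) u \<le> Max (u ` leaves H)"
proof (rule opt_val_le_Max)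
  show "is_behav H (pr_inf lab) (\<lambda>p. freq_strategy H lab [] (fst p))"
    using is_behav_coarsen[of H fst "pr_inf lab"] is_behav_freq_strategy[OF Nil_in_H]
    by (simp add: pr_inf_def)
qed

end

lemma game_with_infosets_if_wf_game: "wf_game H lab u \<Longrightarrow> game_with_infosets H lab"
  unfolding wf_game_def game_with_infosets_def game_with_infosets_axioms_def game_tree_def
  by blast

lemma divide_le_divide_le_inverse:
  fixes p q m b c :: real
  assumes "p \<le> m" and "b \<le> q" and "c * m \<le> b" and "0 < c" and "0 \<le> m"
  shows "p / q \<le> m / b" and "m / b \<le> 1 / c"
proof -
  show "p / q \<le> m / b"
  proof (cases "b = 0")
    case True
    with assms have "m = 0" by (simp add: mult_le_0_iff)
    with True assms show ?thesis by (simp add: divide_nonpos_nonneg)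
  next
    case False
    with assms mult_nonneg_nonneg[of c m] have "0 < b" by linarith
    with assms have "p / q \<le> m / q" by (intro divide_right_mono) auto
    also have "\<dots> \<le> m / b" using assms \<open>0 < b\<close> by (intro divide_left_mono) auto
    finally show ?thesis .
  qed
  show "m / b \<le> 1 / c"
  proof (cases "m = 0")
    case False
    with assms have "0 < c * m" by simp
    with assms have "m / b \<le> m / (c * m)" by (intro divide_left_mono) auto
    with False show ?thesis by simp
  qed (use assms in simp)
qed

theorem proposition7:
  fixes H :: "'a list set" and lab :: "'a list \<Rightarrow> 'i" and u :: "'a list \<Rightarrow> real"
    and zs :: "'a list"
  assumes "wf_game H lab u"
    and "zs \<in> leaves H" and "\<forall>z \<in> leaves H. u z \<le> u zs"
  shows "VoR_opt H lab u \<le> Max (u ` leaves H) / Max ((\<lambda>z. alpha H lab z * u z) ` leaves H)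
       \<and> Max (u ` leaves H) / Max ((\<lambda>z. alpha H lab z * u z) ` leaves H) \<le> 1 / alpha H lab zs"
proof -
  interpret game_with_infosets H lab
    using assms(1) by (rule game_with_infosets_if_wf_game)
  have u_nonneg: "\<forall>z \<in> leaves H. 0 \<le> u z"
    using assms(1) by (simp add: wf_game_def)
  have Max_u: "Max (u ` leaves H) = u zs"
    using assms(2,3) finite_leaves by (intro Max_eqI) auto
  have "Max ((\<lambda>z. alpha H lab z * u z) ` leaves H) \<in> (\<lambda>z. alpha H lab z * u z) ` leaves H"
    using finite_leaves assms(2) by (intro Max_in) auto
  then obtain zm where "zm \<in> leaves H"
    and zm: "Max ((\<lambda>z. alpha H lab z * u z) ` leaves H) = alpha H lab zm * u zm"
    by auto
  have "Max ((\<lambda>z. alpha H lab z * u z) ` leaves H) \<le> opt_val H lab u"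
    unfolding zm using alpha_mult_le_opt_val[OF \<open>zm \<in> leaves H\<close> u_nonneg] .
  moreover have "alpha H lab zs * Max (u ` leaves H) \<le> Max ((\<lambda>z. alpha H lab z * u z) ` leaves H)"
    unfolding Max_u using assms(2) finite_leaves by simp
  moreover have "0 \<le> Max (u ` leaves H)"
    unfolding Max_u using assms(2) u_nonneg by simp
  ultimately show ?thesis
    unfolding VoR_opt_def
    using divide_le_divide_le_inverse[OF opt_val_pr_inf_le_Max _ _ alpha_pos] by blast
qed

end
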